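(* The sectional curvatures of $\mathrm{SU}(n,1)$ with respect to $\tilde{g}$ are bounded above by \[ \frac 14 + 2 \cdot \frac 14 + 2 \cdot \frac 64 \cdot (2n+1) + 2 \cdot \frac 34 \cdot (2n+1) = \frac{36n + 21}{4}. \]
   Context: $\mathrm{SU}(n,1)$ is the indefinite special unitary group, with Lie algebra $\mathfrak{su}(n,1)$ and Cartan decomposition $\mathfrak{su}(n,1)=\mathfrak k\oplus\mathfrak p$ (with $\mathfrak k$ the Lie algebra of the maximal compact subgroup $U(n)$). The canonical metric $g$ is the left-invariant metric given on $\mathfrak{su}(n,1)$ by the Killing form $B(X,Y)=\operatorname{tr}(\operatorname{ad}X\operatorname{ad}Y)$ on $\mathfrak p$, by $-B$ on $\mathfrak k$, with $\mathfrak k\perp\mathfrak p$. The metric $\tilde g$ is $\tilde g=\frac{1}{n+1}g$, which makes the quotient $\mathrm{SU}(n,1)/U(n)$ have holomorphic sectional curvature $-1$. *)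

theory Defs
  imports "HOL-Analysis.Analysis"
begin

text \<open>Matrices of size (n+1) x (n+1) are indexed by the type 'n option, with CARD('n) = n;
  the index None plays the role of the last coordinate (the one with sign -1).\<close>

type_synonym 'n cmat = "complex ^ 'n option ^ 'n option"

definition cadj :: "'n::finite cmat \<Rightarrow> 'n cmat" where
  "cadj A = (\<chi> i j. cnj (A $ j $ i))"

definition Jmat :: "'n::finite cmat" where
  "Jmat = (\<chi> i j. if i = j then (if i = None then -1 else 1) else 0)"

definition su_alg :: "'n::finite cmat set" where
  "su_alg = {X. trace X = 0 \<and> cadj X ** Jmat + Jmat ** X = 0}"

definition lie_br :: "'n::finite cmat \<Rightarrow> 'n cmat \<Rightarrow> 'n cmat" where
  "lie_br X Y = X ** Y - Y ** X"

definition trace_on :: "'a::euclidean_space set \<Rightarrow> ('a \<Rightarrow> 'a) \<Rightarrow> real" where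
  "trace_on V T = (let B = (SOME B. B \<subseteq> V \<and> independent B \<and> span B = V)
                   in (\<Sum>b\<in>B. representation B (T b) b))"

definition killing :: "'n::finite cmat \<Rightarrow> 'n cmat \<Rightarrow> real" where
  "killing X Y = trace_on (su_alg :: 'n cmat set) (\<lambda>Z. lie_br X (lie_br Y Z))"

text \<open>Cartan decomposition: k = skew-Hermitian part (Lie algebra of U(n)), p = Hermitian part.\<close>
definition kpart :: "'n::finite cmat \<Rightarrow> 'n cmat" where
  "kpart X = (1/2::real) *\<^sub>R (X - cadj X)"

definition ppart :: "'n::finite cmat \<Rightarrow> 'n cmat" where
  "ppart X = (1/2::real) *\<^sub>R (X + cadj X)"

definition gcan :: "'n::finite cmat \<Rightarrow> 'n cmat \<Rightarrow> real" where
  "gcan X Y = killing (ppart X) (ppart Y) - killing (kpart X) (kpart Y)"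

definition gtil :: "'n::finite cmat \<Rightarrow> 'n cmat \<Rightarrow> real" where
  "gtil X Y = gcan X Y / (real CARD('n) + 1)"

text \<open>Levi-Civita connection on left-invariant fields (Koszul formula).\<close>
definition nabla :: "'n::finite cmat \<Rightarrow> 'n cmat \<Rightarrow> 'n cmat" where
  "nabla X Y = (THE Z. Z \<in> su_alg \<and> (\<forall>W\<in>su_alg.
      gtil Z W = (gtil (lie_br X Y) W - gtil (lie_br Y W) X + gtil (lie_br W X) Y) / 2))"

definition curv :: "'n::finite cmat \<Rightarrow> 'n cmat \<Rightarrow> 'n cmat \<Rightarrow> 'n cmat" where
  "curv X Y Z = nabla X (nabla Y Z) - nabla Y (nabla X Z) - nabla (lie_br X Y) Z"

definition sec_curv :: "'n::finite cmat \<Rightarrow> 'n cmat \<Rightarrow> real" where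
  "sec_curv X Y = gtil (curv X Y Y) X / (gtil X X * gtil Y Y - (gtil X Y)\<^sup>2)"

end

theory Submission
  imports Defs
begin

text \<open>
  Write \<open>|.|\<close> for the norm of \<open>g\<^sub>~\<close> on \<open>su(n,1)\<close>. Since \<open>(n+1) g\<^sub>~(X,Y) = B(X\<^sup>*,Y)\<close>
  and \<open>ad X\<^sup>*\<close> is the \<open>g\<^sub>~\<close>-adjoint of \<open>ad X\<close>, computing \<open>B(Z\<^sup>*,Z) = tr(ad Z\<^sup>* ad Z)\<close> in an
  orthonormal basis through \<open>Y/|Y|\<close> gives \<open>|[Z,Y]|\<^sup>2 \<le> (n+1) |Z|\<^sup>2 |Y|\<^sup>2\<close>.
  For any left-invariant metric with \<open>|[X,Y]|\<^sup>2 \<le> C |X|\<^sup>2 |Y|\<^sup>2\<close>, the Koszul formula gives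
  \<open>|\<nabla>\<^sub>X Y| \<le> 3/2 \<surd>C |X| |Y|\<close>; metric compatibility turns \<open>g(R(X,Y)Y,X)\<close> into
  \<open>-g(\<nabla>\<^sub>Y Y,\<nabla>\<^sub>X X) + g(\<nabla>\<^sub>X Y,\<nabla>\<^sub>Y X) - g(\<nabla>\<^bsub>[X,Y]\<^esub> Y,X)\<close>, which is therefore at most
  \<open>(9/4 + 9/4 + 3/2) C |X|\<^sup>2 |Y|\<^sup>2\<close>. As this numerator is unchanged when \<open>Y\<close> is made
  orthogonal to \<open>X\<close>, all sectional curvatures are at most \<open>6C = 6(n+1) \<le> (36n+21)/4\<close>.
\<close>

section \<open>Orthonormal frames and traces\<close>

definition inner_product_on :: "('a::real_vector \<Rightarrow> 'a \<Rightarrow> real) \<Rightarrow> 'a set \<Rightarrow> bool" where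
  "inner_product_on G V \<longleftrightarrow>
     bilinear G \<and> (\<forall>a\<in>V. \<forall>b\<in>V. G a b = G b a) \<and> (\<forall>a\<in>V. a \<noteq> 0 \<longrightarrow> 0 < G a a)"

definition orthonormal_wrt :: "('a::real_vector \<Rightarrow> 'a \<Rightarrow> real) \<Rightarrow> 'a set \<Rightarrow> bool" where
  "orthonormal_wrt G F \<longleftrightarrow> (\<forall>f\<in>F. G f f = 1) \<and> (\<forall>f\<in>F. \<forall>f'\<in>F. f \<noteq> f' \<longrightarrow> G f f' = 0)"

definition orthonormal_frame :: "('a::real_vector \<Rightarrow> 'a \<Rightarrow> real) \<Rightarrow> 'a set \<Rightarrow> 'a set \<Rightarrow> bool" where
  "orthonormal_frame G V F \<longleftrightarrow> finite F \<and> F \<subseteq> V \<and> orthonormal_wrt G F \<and> V \<subseteq> span F"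

lemma bilinear_inner: "bilinear ((\<bullet>) :: 'a::real_inner \<Rightarrow> 'a \<Rightarrow> real)"
  by (auto simp: bilinear_def intro!: linearI simp: inner_add_left inner_add_right)

lemma inner_product_on_inner: "inner_product_on (\<bullet>) (V :: 'a::real_inner set)"
  by (simp add: inner_product_on_def bilinear_inner inner_commute)

lemma bilinear_sum_scaleR_left:
  assumes "bilinear G"
  shows "G (\<Sum>i\<in>I. a i *\<^sub>R v i) w = (\<Sum>i\<in>I. a i * G (v i) w)"
proof -
  interpret linear "\<lambda>x. G x w" using assms by (simp add: bilinear_def)
  show ?thesis by (simp add: sum scale)
qed

lemma orthonormal_wrt_sum_coeff:
  assumes "bilinear G" "orthonormal_wrt G F" "finite F" "f \<in> F"
  shows "G (\<Sum>f'\<in>F. u f' *\<^sub>R f') f = u f"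
proof -
  have "G (\<Sum>f'\<in>F. u f' *\<^sub>R f') f = (\<Sum>f'\<in>F. if f' = f then u f else 0)"
    unfolding bilinear_sum_scaleR_left[OF assms(1)]
    by (rule sum.cong) (use assms(2,4) in \<open>auto simp: orthonormal_wrt_def\<close>)
  also have "\<dots> = u f" using assms(3,4) by simp
  finally show ?thesis .
qed

lemma orthonormal_expansion:
  assumes "bilinear G" "orthonormal_wrt G F" "finite F" "v \<in> span F"
  shows "v = (\<Sum>f\<in>F. G v f *\<^sub>R f)"
proof -
  obtain u where u: "v = (\<Sum>f\<in>F. u f *\<^sub>R f)" using assms(3,4) span_finite by auto
  then show ?thesis using orthonormal_wrt_sum_coeff[OF assms(1-3)] by simp
qed

lemma orthonormal_frame_expansion:
  "bilinear G \<Longrightarrow> orthonormal_frame G V F \<Longrightarrow> v \<in> V \<Longrightarrow> v = (\<Sum>f\<in>F. G v f *\<^sub>R f)"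
  unfolding orthonormal_frame_def by (blast intro: orthonormal_expansion)

lemma gram_schmidt_step:
  assumes ip: "inner_product_on G V" and V: "subspace V"
    and F: "finite F" "F \<subseteq> V" "orthonormal_wrt G F" and x: "x \<in> V"
  obtains F' where "finite F'" "F \<subseteq> F'" "F' \<subseteq> V" "orthonormal_wrt G F'" "x \<in> span F'"
proof (cases "x \<in> span F")
  case True
  then show ?thesis using that F by blast
next
  case False
  have bil: "bilinear G" using ip by (simp add: inner_product_on_def)
  define w where "w = x - (\<Sum>f\<in>F. G x f *\<^sub>R f)"
  have w_span: "x - w \<in> span F" unfolding w_def by (simp add: span_sum span_scale span_base)
  have wV: "w \<in> V" unfolding w_def using F(2) x
    by (intro subspace_diff[OF V] subspace_sum[OF V] subspace_scale[OF V]) auto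
  have w0: "w \<noteq> 0" using False w_span by auto
  have wf: "G w f = 0" if "f \<in> F" for f
    using orthonormal_wrt_sum_coeff[OF bil F(3,1) that, of "\<lambda>f. G x f"] that
    by (simp add: w_def bilinear_lsub[OF bil])
  have pos: "0 < G w w" using ip wV w0 by (simp add: inner_product_on_def)
  define e where "e = (1 / sqrt (G w w)) *\<^sub>R w"
  have eV: "e \<in> V" using wV by (simp add: e_def subspace_scale[OF V])
  have ee: "G e e = 1"
    using pos by (simp add: e_def bilinear_lmul[OF bil] bilinear_rmul[OF bil])
  have ef: "G e f = 0" "G f e = 0" if "f \<in> F" for f
  proof -
    show "G e f = 0" using wf[OF that] by (simp add: e_def bilinear_lmul[OF bil])
    then show "G f e = 0" using ip eV F(2) that by (auto simp: inner_product_on_def)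
  qed
  have "e \<notin> F" using ee ef by fastforce
  then have orth: "orthonormal_wrt G (insert e F)"
    using F(3) ee ef by (auto simp: orthonormal_wrt_def)
  have "w \<in> span (insert e F)"
    using pos span_scale[of e "insert e F" "sqrt (G w w)"] by (simp add: e_def span_base)
  then have "x \<in> span (insert e F)"
    using w_span span_mono[of F "insert e F"] span_add[of w _ "x - w"] by auto
  then show ?thesis using that[of "insert e F"] F eV orth by auto
qed

lemma orthonormal_frame_extend:
  fixes G :: "'a::euclidean_space \<Rightarrow> 'a \<Rightarrow> real"
  assumes ip: "inner_product_on G V" and V: "subspace V"
    and F0: "finite F0" "F0 \<subseteq> V" "orthonormal_wrt G F0"
  obtains F where "F0 \<subseteq> F" "orthonormal_frame G V F"
proof -
  obtain S where S: "finite S" "S \<subseteq> V" "span S = V"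
    using basis_subspace_exists[OF V] by metis
  have "\<exists>F. finite F \<and> F0 \<subseteq> F \<and> F \<subseteq> V \<and> orthonormal_wrt G F \<and> S' \<subseteq> span F"
    if "S' \<subseteq> S" for S'
    using finite_subset[OF that S(1)] that
  proof (induction S' rule: finite_subset_induct)
    case empty
    then show ?case using F0 by blast
  next
    case (insert x S')
    then obtain F where F: "finite F" "F0 \<subseteq> F" "F \<subseteq> V" "orthonormal_wrt G F" "S' \<subseteq> span F"
      by blast
    obtain F' where "finite F'" "F \<subseteq> F'" "F' \<subseteq> V" "orthonormal_wrt G F'" "x \<in> span F'"
      using gram_schmidt_step[OF ip V F(1,3,4), of x] insert.hyps S(2) by blast
    then show ?case using F span_mono[of F F'] by (intro exI[of _ F']) auto
  qed
  then obtain F where "finite F" "F0 \<subseteq> F" "F \<subseteq> V" "orthonormal_wrt G F" "S \<subseteq> span F"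
    by blast
  moreover have "V \<subseteq> span F" using span_minimal[OF \<open>S \<subseteq> span F\<close> subspace_span] S(3) by simp
  ultimately show ?thesis using that by (auto simp: orthonormal_frame_def)
qed

lemma trace_on_expansion:
  fixes G :: "'a::euclidean_space \<Rightarrow> 'a \<Rightarrow> real"
  assumes V: "subspace V" and G: "bilinear G" and I: "finite I"
    and fV: "\<And>i. i \<in> I \<Longrightarrow> f i \<in> V"
    and expand: "\<And>v. v \<in> V \<Longrightarrow> v = (\<Sum>i\<in>I. G v (f i) *\<^sub>R f i)"
    and T: "linear T" "\<And>v. v \<in> V \<Longrightarrow> T v \<in> V"
  shows "trace_on V T = (\<Sum>i\<in>I. G (T (f i)) (f i))"
proof -
  define B where "B = (SOME B. B \<subseteq> V \<and> independent B \<and> span B = V)"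
  have "\<exists>B. B \<subseteq> V \<and> independent B \<and> span B = V"
    using basis_subspace_exists[OF V] by metis
  then have B: "B \<subseteq> V" "independent B" "span B = V"
    unfolding B_def by (metis (mono_tags, lifting) someI_ex)+
  have fin: "finite B" using independent_bound B(2) by blast
  have coeff: "representation B (T b) b = (\<Sum>i\<in>I. G (T b) (f i) * representation B (f i) b)"
    if "b \<in> B" for b
  proof -
    have "representation B (T b) b = representation B (\<Sum>i\<in>I. G (T b) (f i) *\<^sub>R f i) b"
      using expand[OF T(2)] B(1) that by auto
    also have "\<dots> = (\<Sum>i\<in>I. representation B (G (T b) (f i) *\<^sub>R f i) b)"
      using representation_sum[OF B(2), of I] fV B(3) by (simp add: subspace_scale[OF V])
    finally show ?thesis using representation_scale[OF B(2)] fV B(3) by simp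
  qed
  have "trace_on V T = (\<Sum>b\<in>B. representation B (T b) b)"
    unfolding trace_on_def Let_def B_def ..
  also have "\<dots> = (\<Sum>b\<in>B. \<Sum>i\<in>I. representation B (f i) b * G (T b) (f i))"
    by (simp add: coeff mult.commute)
  also have "\<dots> = (\<Sum>i\<in>I. \<Sum>b\<in>B. representation B (f i) b * G (T b) (f i))"
    by (rule sum.swap)
  also have "\<dots> = (\<Sum>i\<in>I. G (T (\<Sum>b\<in>B. representation B (f i) b *\<^sub>R b)) (f i))"
    by (simp add: bilinear_sum_scaleR_left[OF G] linear_sum[OF T(1)] linear_scale[OF T(1)])
  also have "\<dots> = (\<Sum>i\<in>I. G (T (f i)) (f i))"
    using sum_representation_eq[OF B(2) _ fin order_refl] fV B(3) by simp
  finally show ?thesis .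
qed

lemma trace_on_orthonormal_frame:
  fixes G :: "'a::euclidean_space \<Rightarrow> 'a \<Rightarrow> real"
  assumes "subspace V" "bilinear G" "orthonormal_frame G V F"
    and "linear T" "\<And>v. v \<in> V \<Longrightarrow> T v \<in> V"
  shows "trace_on V T = (\<Sum>f\<in>F. G (T f) f)"
  using trace_on_expansion[of V G F id, OF assms(1,2)] assms(3-5)
    orthonormal_frame_expansion[OF assms(2,3)]
  by (auto simp: orthonormal_frame_def)

lemma orthonormal_frame_exists:
  fixes V :: "'a::euclidean_space set"
  assumes "subspace V"
  obtains F where "orthonormal_frame (\<bullet>) V F"
  using orthonormal_frame_extend[OF inner_product_on_inner assms, of "{}"]
  by (auto simp: orthonormal_wrt_def)

lemma trace_on_commute:
  fixes V :: "'a::euclidean_space set"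
  assumes V: "subspace V" and S: "linear S" "\<And>v. v \<in> V \<Longrightarrow> S v \<in> V"
    and T: "linear T" "\<And>v. v \<in> V \<Longrightarrow> T v \<in> V"
  shows "trace_on V (\<lambda>v. S (T v)) = trace_on V (\<lambda>v. T (S v))"
proof -
  obtain F where F: "orthonormal_frame (\<bullet>) V F" using orthonormal_frame_exists[OF V] .
  have fin: "finite F" and FV: "F \<subseteq> V" using F by (auto simp: orthonormal_frame_def)
  have expand: "\<And>v. v \<in> V \<Longrightarrow> v = (\<Sum>f\<in>F. (v \<bullet> f) *\<^sub>R f)"
    using orthonormal_frame_expansion[OF bilinear_inner F] .
  have ST: "S (T e) \<bullet> e = (\<Sum>f\<in>F. (T e \<bullet> f) * (S f \<bullet> e))" if "e \<in> F" for e
  proof -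
    have "S (T e) = S (\<Sum>f\<in>F. (T e \<bullet> f) *\<^sub>R f)" using expand T(2) FV that by auto
    then show ?thesis by (simp add: linear_sum[OF S(1)] linear_scale[OF S(1)] inner_sum_left)
  qed
  have TS: "T (S f) \<bullet> f = (\<Sum>e\<in>F. (S f \<bullet> e) * (T e \<bullet> f))" if "f \<in> F" for f
  proof -
    have "T (S f) = T (\<Sum>e\<in>F. (S f \<bullet> e) *\<^sub>R e)" using expand S(2) FV that by auto
    then show ?thesis by (simp add: linear_sum[OF T(1)] linear_scale[OF T(1)] inner_sum_left)
  qed
  have "(\<Sum>e\<in>F. S (T e) \<bullet> e) = (\<Sum>e\<in>F. \<Sum>f\<in>F. (S f \<bullet> e) * (T e \<bullet> f))"
    by (simp add: ST mult.commute)
  also have "\<dots> = (\<Sum>f\<in>F. T (S f) \<bullet> f)"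
    by (subst sum.swap) (simp add: TS)
  finally have "(\<Sum>e\<in>F. S (T e) \<bullet> e) = (\<Sum>f\<in>F. T (S f) \<bullet> f)" .
  moreover have "linear (\<lambda>v. S (T v))" "linear (\<lambda>v. T (S v))"
    using linear_compose[OF T(1) S(1)] linear_compose[OF S(1) T(1)] by (simp_all add: o_def)
  ultimately show ?thesis
    using trace_on_orthonormal_frame[OF V bilinear_inner F] S T by simp
qed

lemma trace_on_diff:
  fixes V :: "'a::euclidean_space set"
  assumes V: "subspace V" and S: "linear S" "\<And>v. v \<in> V \<Longrightarrow> S v \<in> V"
    and T: "linear T" "\<And>v. v \<in> V \<Longrightarrow> T v \<in> V"
  shows "trace_on V (\<lambda>v. S v - T v) = trace_on V S - trace_on V T"
proof -
  obtain F where F: "orthonormal_frame (\<bullet>) V F" using orthonormal_frame_exists[OF V] .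
  have "linear (\<lambda>v. S v - T v)"
    by (rule linearI) (simp_all add: linear_add[OF S(1)] linear_add[OF T(1)]
        linear_scale[OF S(1)] linear_scale[OF T(1)] scaleR_diff_right)
  then show ?thesis
    using trace_on_orthonormal_frame[OF V bilinear_inner F] S T subspace_diff[OF V]
    by (simp add: inner_diff_left sum_subtractf)
qed

lemma trace_on_scaleR:
  fixes V :: "'a::euclidean_space set"
  assumes V: "subspace V" and T: "linear T" "\<And>v. v \<in> V \<Longrightarrow> T v \<in> V"
  shows "trace_on V (\<lambda>v. c *\<^sub>R T v) = c * trace_on V T"
proof -
  obtain F where F: "orthonormal_frame (\<bullet>) V F" using orthonormal_frame_exists[OF V] .
  have "linear (\<lambda>v. c *\<^sub>R T v)"
    by (rule linearI) (simp_all add: linear_add[OF T(1)] linear_scale[OF T(1)] scaleR_add_right)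
  then show ?thesis
    using trace_on_orthonormal_frame[OF V bilinear_inner F] T subspace_scale[OF V]
    by (simp add: sum_distrib_left)
qed

lemma trace_on_conj_isometric_involution:
  fixes V :: "'a::euclidean_space set"
  assumes V: "subspace V" and \<theta>: "linear \<theta>" "\<And>v. v \<in> V \<Longrightarrow> \<theta> v \<in> V"
    "\<And>v. \<theta> (\<theta> v) = v" "\<And>v w. \<theta> v \<bullet> \<theta> w = v \<bullet> w"
    and T: "linear T" "\<And>v. v \<in> V \<Longrightarrow> T v \<in> V"
  shows "trace_on V (\<lambda>v. \<theta> (T (\<theta> v))) = trace_on V T"
proof -
  obtain F where F: "orthonormal_frame (\<bullet>) V F" using orthonormal_frame_exists[OF V] .
  have fin: "finite F" and FV: "F \<subseteq> V" using F by (auto simp: orthonormal_frame_def)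
  have twisted: "v = (\<Sum>f\<in>F. (v \<bullet> \<theta> f) *\<^sub>R \<theta> f)" if "v \<in> V" for v
  proof -
    have "\<theta> v = (\<Sum>f\<in>F. (\<theta> v \<bullet> f) *\<^sub>R f)"
      using orthonormal_frame_expansion[OF bilinear_inner F] \<theta>(2) that by blast
    then have "\<theta> (\<theta> v) = \<theta> (\<Sum>f\<in>F. (\<theta> v \<bullet> f) *\<^sub>R f)" by (rule arg_cong)
    also have "\<dots> = (\<Sum>f\<in>F. (\<theta> v \<bullet> f) *\<^sub>R \<theta> f)"
      by (simp add: linear_sum[OF \<theta>(1)] linear_scale[OF \<theta>(1)])
    finally have "\<theta> (\<theta> v) = (\<Sum>f\<in>F. (\<theta> v \<bullet> f) *\<^sub>R \<theta> f)" .
    then show ?thesis using \<theta>(3) \<theta>(4)[of v "\<theta> f" for f] by simp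
  qed
  have "linear (\<lambda>v. \<theta> (T (\<theta> v)))"
    using linear_compose[OF \<theta>(1) linear_compose[OF T(1) \<theta>(1)]] by (simp add: o_def)
  then have "trace_on V (\<lambda>v. \<theta> (T (\<theta> v))) = (\<Sum>f\<in>F. \<theta> (T (\<theta> f)) \<bullet> f)"
    using trace_on_orthonormal_frame[OF V bilinear_inner F] \<theta> T by simp
  also have "\<dots> = (\<Sum>f\<in>F. T (\<theta> f) \<bullet> \<theta> f)"
    using \<theta>(3) \<theta>(4)[of "T (\<theta> f)" "\<theta> f" for f] by simp
  also have "\<dots> = trace_on V T"
    using trace_on_expansion[OF V bilinear_inner fin _ twisted T] \<theta>(2) FV by (metis subsetD)
  finally show ?thesis .
qed

section \<open>Levi-Civita connection of a metric Lie algebra\<close>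

locale metric_lie_algebra =
  fixes V :: "'a::euclidean_space set"
    and br :: "'a \<Rightarrow> 'a \<Rightarrow> 'a"
    and g :: "'a \<Rightarrow> 'a \<Rightarrow> real"
  assumes subspace_V: "subspace V"
    and bilinear_br: "bilinear br"
    and br_anticomm: "br a b = - br b a"
    and br_closed: "a \<in> V \<Longrightarrow> b \<in> V \<Longrightarrow> br a b \<in> V"
    and inner_product: "inner_product_on g V"
begin

lemma bilinear_g: "bilinear g"
  using inner_product by (simp add: inner_product_on_def)

lemma g_sym: "a \<in> V \<Longrightarrow> b \<in> V \<Longrightarrow> g a b = g b a"
  using inner_product by (simp add: inner_product_on_def)

lemma g_pos: "a \<in> V \<Longrightarrow> a \<noteq> 0 \<Longrightarrow> 0 < g a a"
  using inner_product by (simp add: inner_product_on_def)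

lemma g_nonneg: "a \<in> V \<Longrightarrow> 0 \<le> g a a"
  using g_pos[of a] bilinear_lzero[OF bilinear_g] by (cases "a = 0") auto

lemmas g_add_left = bilinear_ladd[OF bilinear_g]
  and g_add_right = bilinear_radd[OF bilinear_g]
  and g_diff_left = bilinear_lsub[OF bilinear_g]
  and g_diff_right = bilinear_rsub[OF bilinear_g]
  and g_scaleR_left = bilinear_lmul[OF bilinear_g]
  and g_scaleR_right = bilinear_rmul[OF bilinear_g]
  and g_uminus_left = bilinear_lneg[OF bilinear_g]

lemma g_cauchy_schwarz:
  assumes a: "a \<in> V" and b: "b \<in> V"
  shows "(g a b)\<^sup>2 \<le> g a a * g b b"
proof (cases "b = 0")
  case True
  then show ?thesis by (simp add: bilinear_rzero[OF bilinear_g])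
next
  case False
  have pos: "0 < g b b" using g_pos[OF b False] .
  define t where "t = g a b / g b b"
  have "0 \<le> g (a - t *\<^sub>R b) (a - t *\<^sub>R b)"
    using a b by (simp add: g_nonneg subspace_diff[OF subspace_V] subspace_scale[OF subspace_V])
  also have "\<dots> = g a a - (g a b)\<^sup>2 / g b b"
    using pos g_sym[OF a b]
    by (simp add: t_def g_diff_left g_diff_right g_scaleR_left g_scaleR_right power2_eq_square
        field_simps)
  finally show ?thesis using pos by (simp add: field_simps)
qed

definition gnorm :: "'a \<Rightarrow> real" where
  "gnorm a = sqrt (g a a)"

lemma gnorm_nonneg: "a \<in> V \<Longrightarrow> 0 \<le> gnorm a"
  by (simp add: gnorm_def g_nonneg)

lemma gnorm_mult_self: "a \<in> V \<Longrightarrow> gnorm a * gnorm a = g a a"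
  by (simp add: gnorm_def g_nonneg)

lemma abs_g_le: "a \<in> V \<Longrightarrow> b \<in> V \<Longrightarrow> \<bar>g a b\<bar> \<le> gnorm a * gnorm b"
  using real_sqrt_le_mono[OF g_cauchy_schwarz, of a b]
  by (simp add: gnorm_def real_sqrt_mult)

lemma abs_g_le_of_gnorm_le:
  "a \<in> V \<Longrightarrow> b \<in> V \<Longrightarrow> gnorm a \<le> p \<Longrightarrow> gnorm b \<le> q \<Longrightarrow> \<bar>g a b\<bar> \<le> p * q"
  using abs_g_le[of a b] mult_mono[of "gnorm a" p "gnorm b" q] gnorm_nonneg[of a] gnorm_nonneg[of b]
  by force

text \<open>For left-invariant fields the derivative terms of the Koszul formula vanish and only
  brackets remain.\<close>
definition koszul :: "'a \<Rightarrow> 'a \<Rightarrow> 'a \<Rightarrow> real" where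
  "koszul X Y W = (g (br X Y) W - g (br Y W) X + g (br W X) Y) / 2"

lemma linear_koszul: "linear (koszul X Y)"
  by (rule linearI)
    (simp_all add: koszul_def bilinear_ladd[OF bilinear_br] bilinear_radd[OF bilinear_br]
      bilinear_lmul[OF bilinear_br] bilinear_rmul[OF bilinear_br]
      g_add_left g_add_right g_scaleR_left g_scaleR_right field_simps)

lemma koszul_skew: "koszul X U W + koszul X W U = 0"
  using br_anticomm[of U X] br_anticomm[of W U] br_anticomm[of X W]
  by (simp add: koszul_def g_uminus_left field_simps)

lemma koszul_representable: "\<exists>!Z. Z \<in> V \<and> (\<forall>W\<in>V. g Z W = koszul X Y W)"
proof (rule ex_ex1I)
  obtain F where F: "orthonormal_frame g V F"
    using orthonormal_frame_extend[OF inner_product subspace_V, of "{}"]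
    by (auto simp: orthonormal_wrt_def)
  then have fin: "finite F" and FV: "F \<subseteq> V" by (auto simp: orthonormal_frame_def)
  define Z where "Z = (\<Sum>f\<in>F. koszul X Y f *\<^sub>R f)"
  have "Z \<in> V" unfolding Z_def using FV
    by (intro subspace_sum[OF subspace_V] subspace_scale[OF subspace_V]) auto
  moreover have "g Z W = koszul X Y W" if W: "W \<in> V" for W
  proof -
    have "g Z W = (\<Sum>f\<in>F. g W f * koszul X Y f)"
      unfolding Z_def bilinear_sum_scaleR_left[OF bilinear_g]
      using g_sym W FV by (intro sum.cong) auto
    also have "\<dots> = koszul X Y (\<Sum>f\<in>F. g W f *\<^sub>R f)"
      by (simp add: linear_sum[OF linear_koszul] linear_scale[OF linear_koszul])
    also have "\<dots> = koszul X Y W"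
      using orthonormal_frame_expansion[OF bilinear_g F W] by simp
    finally show ?thesis .
  qed
  ultimately show "\<exists>Z. Z \<in> V \<and> (\<forall>W\<in>V. g Z W = koszul X Y W)" by blast
next
  fix Z Z'
  assume Z: "Z \<in> V \<and> (\<forall>W\<in>V. g Z W = koszul X Y W)"
    and Z': "Z' \<in> V \<and> (\<forall>W\<in>V. g Z' W = koszul X Y W)"
  then have "Z - Z' \<in> V" by (simp add: subspace_diff[OF subspace_V])
  moreover have "g (Z - Z') (Z - Z') = 0" using Z Z' calculation by (simp add: g_diff_left)
  ultimately show "Z = Z'" using g_pos by force
qed

definition nab :: "'a \<Rightarrow> 'a \<Rightarrow> 'a" where
  "nab X Y = (THE Z. Z \<in> V \<and> (\<forall>W\<in>V. g Z W = koszul X Y W))"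

lemma nab_in: "nab X Y \<in> V" and g_nab: "W \<in> V \<Longrightarrow> g (nab X Y) W = koszul X Y W"
  using theI'[OF koszul_representable[of X Y]] by (simp_all add: nab_def)

lemma nab_unique: "Z \<in> V \<Longrightarrow> (\<And>W. W \<in> V \<Longrightarrow> g Z W = koszul X Y W) \<Longrightarrow> nab X Y = Z"
  using koszul_representable[of X Y] nab_in g_nab by blast

lemma bilinear_nab: "bilinear nab"
proof -
  note brl = bilinear_br
  have koszul_args: "koszul (X + X') Y W = koszul X Y W + koszul X' Y W"
    "koszul X (Y + Y') W = koszul X Y W + koszul X Y' W"
    "koszul (c *\<^sub>R X) Y W = c * koszul X Y W" "koszul X (c *\<^sub>R Y) W = c * koszul X Y W"
    for X X' Y Y' W c
    by (simp_all add: koszul_def bilinear_ladd[OF brl] bilinear_radd[OF brl] bilinear_lmul[OF brl]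
        bilinear_rmul[OF brl] g_add_left g_add_right g_scaleR_left g_scaleR_right field_simps)
  have "nab X (Y + Y') = nab X Y + nab X Y'" "nab X (c *\<^sub>R Y) = c *\<^sub>R nab X Y"
    "nab (X + X') Y = nab X Y + nab X' Y" "nab (c *\<^sub>R X) Y = c *\<^sub>R nab X Y" for X X' Y Y' c
    by (rule nab_unique;
        simp add: nab_in g_nab subspace_add[OF subspace_V] subspace_scale[OF subspace_V]
          g_add_left g_scaleR_left koszul_args)+
  then show ?thesis by (auto simp: bilinear_def intro!: linearI)
qed

lemma g_nab_skew: "U \<in> V \<Longrightarrow> W \<in> V \<Longrightarrow> g (nab X U) W = - g U (nab X W)"
  using koszul_skew[of X U W] g_nab[of W X U] g_nab[of U X W] g_sym[OF _ nab_in, of U X W] by simp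

definition curvature :: "'a \<Rightarrow> 'a \<Rightarrow> 'a \<Rightarrow> 'a" where
  "curvature X Y Z = nab X (nab Y Z) - nab Y (nab X Z) - nab (br X Y) Z"

lemma curvature_in: "curvature X Y Z \<in> V"
  by (simp add: curvature_def nab_in subspace_diff[OF subspace_V])

lemma g_curvature_self: "Z \<in> V \<Longrightarrow> g (curvature X Y Z) Z = 0"
  using g_nab_skew[OF nab_in, of Z X Y Z] g_nab_skew[OF nab_in, of Z Y X Z]
    g_nab_skew[of Z Z "br X Y"] g_sym[OF nab_in nab_in, of X Z Y Z] g_sym[OF _ nab_in, of Z "br X Y" Z]
  by (simp add: curvature_def g_diff_left)

lemma curvature_numerator:
  assumes "X \<in> V" "Y \<in> V"
  shows "g (curvature X Y Y) X
           = - g (nab Y Y) (nab X X) + g (nab X Y) (nab Y X) - g (nab (br X Y) Y) X"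
  using g_nab_skew[OF nab_in assms(1), of X Y Y] g_nab_skew[OF nab_in assms(1), of Y X Y]
  by (simp add: curvature_def g_diff_left)

lemma br_self: "br a a = 0"
  using br_anticomm[of a a] by (simp add: eq_neg_iff_add_eq_0 flip: scaleR_2)

lemma curvature_add_second: "curvature X (Y + Y') Z = curvature X Y Z + curvature X Y' Z"
  and curvature_scaleR_second: "curvature X (c *\<^sub>R Y) Z = c *\<^sub>R curvature X Y Z"
  and curvature_add_third: "curvature X Y (Z + Z') = curvature X Y Z + curvature X Y Z'"
  and curvature_scaleR_third: "curvature X Y (c *\<^sub>R Z) = c *\<^sub>R curvature X Y Z"
  and curvature_same: "curvature X X Z = 0"
  by (simp_all add: curvature_def bilinear_ladd[OF bilinear_nab] bilinear_radd[OF bilinear_nab]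
      bilinear_lmul[OF bilinear_nab] bilinear_rmul[OF bilinear_nab] bilinear_radd[OF bilinear_br]
      bilinear_rmul[OF bilinear_br] br_self bilinear_lzero[OF bilinear_nab] algebra_simps)

lemma curvature_shear:
  assumes "X \<in> V" "Y \<in> V"
  shows "g (curvature X (Y + t *\<^sub>R X) (Y + t *\<^sub>R X)) X = g (curvature X Y Y) X"
proof -
  have "curvature X (Y + t *\<^sub>R X) (Y + t *\<^sub>R X) = curvature X Y Y + t *\<^sub>R curvature X Y X"
    by (simp add: curvature_add_second curvature_scaleR_second curvature_same curvature_add_third
        curvature_scaleR_third)
  then show ?thesis using g_curvature_self[OF assms(1), of X Y] by (simp add: g_add_left g_scaleR_left)
qed

context
  fixes C :: real
  assumes C_nonneg: "0 \<le> C"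
    and br_bound: "\<And>a b. a \<in> V \<Longrightarrow> b \<in> V \<Longrightarrow> g (br a b) (br a b) \<le> C * g a a * g b b"
begin

lemma gnorm_br_le: "a \<in> V \<Longrightarrow> b \<in> V \<Longrightarrow> gnorm (br a b) \<le> sqrt C * gnorm a * gnorm b"
  using real_sqrt_le_mono[OF br_bound, of a b] by (simp add: gnorm_def real_sqrt_mult)

lemma abs_koszul_le:
  assumes A: "A \<in> V" and B: "B \<in> V" and W: "W \<in> V"
  shows "\<bar>koszul A B W\<bar> \<le> 3/2 * sqrt C * gnorm A * gnorm B * gnorm W"
proof -
  let ?m = "sqrt C * gnorm A * gnorm B * gnorm W"
  have "\<bar>g (br A B) W\<bar> \<le> (sqrt C * gnorm A * gnorm B) * gnorm W"
    using A B W by (intro abs_g_le_of_gnorm_le gnorm_br_le br_closed) auto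
  moreover have "\<bar>g (br B W) A\<bar> \<le> (sqrt C * gnorm B * gnorm W) * gnorm A"
    using A B W by (intro abs_g_le_of_gnorm_le gnorm_br_le br_closed) auto
  moreover have "\<bar>g (br W A) B\<bar> \<le> (sqrt C * gnorm W * gnorm A) * gnorm B"
    using A B W by (intro abs_g_le_of_gnorm_le gnorm_br_le br_closed) auto
  ultimately have "\<bar>g (br A B) W\<bar> \<le> ?m" "\<bar>g (br B W) A\<bar> \<le> ?m" "\<bar>g (br W A) B\<bar> \<le> ?m"
    by (simp_all add: mult_ac)
  then show ?thesis by (simp add: koszul_def abs_le_iff)
qed

lemma gnorm_nab_le:
  assumes A: "A \<in> V" and B: "B \<in> V"
  shows "gnorm (nab A B) \<le> 3/2 * sqrt C * gnorm A * gnorm B"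
proof -
  let ?c = "3/2 * sqrt C * gnorm A * gnorm B"
  have "gnorm (nab A B) * gnorm (nab A B) = koszul A B (nab A B)"
    by (simp add: gnorm_mult_self nab_in g_nab)
  also have "\<dots> \<le> ?c * gnorm (nab A B)"
    using abs_le_D1[OF abs_koszul_le[OF A B nab_in[of A B]]] by simp
  finally have "gnorm (nab A B) * gnorm (nab A B) \<le> ?c * gnorm (nab A B)" .
  moreover have "0 \<le> ?c" using C_nonneg A B by (simp add: gnorm_nonneg)
  moreover have "0 \<le> gnorm (nab A B)" by (simp add: gnorm_nonneg nab_in)
  ultimately show ?thesis by (cases "gnorm (nab A B) = 0") (auto simp: mult_le_cancel_right)
qed

lemma curvature_numerator_le:
  assumes X: "X \<in> V" and Y: "Y \<in> V"
  shows "g (curvature X Y Y) X \<le> 6 * C * g X X * g Y Y"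
proof -
  let ?c = "3/2 * sqrt C" and ?x = "gnorm X" and ?y = "gnorm Y"
  have XY: "br X Y \<in> V" using X Y by (rule br_closed)
  have "gnorm (nab (br X Y) Y) \<le> ?c * (sqrt C * ?x * ?y) * ?y"
  proof -
    have "gnorm (nab (br X Y) Y) \<le> ?c * gnorm (br X Y) * ?y" by (rule gnorm_nab_le[OF XY Y])
    also have "\<dots> \<le> ?c * (sqrt C * ?x * ?y) * ?y"
      using gnorm_br_le[OF X Y] gnorm_nonneg[OF Y] C_nonneg
      by (intro mult_right_mono mult_left_mono) auto
    finally show ?thesis .
  qed
  then have "\<bar>g (nab (br X Y) Y) X\<bar> \<le> (?c * (sqrt C * ?x * ?y) * ?y) * ?x"
    using X by (intro abs_g_le_of_gnorm_le nab_in) auto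
  moreover have "\<bar>g (nab Y Y) (nab X X)\<bar> \<le> (?c * ?y * ?y) * (?c * ?x * ?x)"
    using X Y by (intro abs_g_le_of_gnorm_le nab_in gnorm_nab_le)
  moreover have "\<bar>g (nab X Y) (nab Y X)\<bar> \<le> (?c * ?x * ?y) * (?c * ?y * ?x)"
    using X Y by (intro abs_g_le_of_gnorm_le nab_in gnorm_nab_le)
  ultimately have "g (curvature X Y Y) X \<le>
      (?c * ?y * ?y) * (?c * ?x * ?x) + (?c * ?x * ?y) * (?c * ?y * ?x) + (?c * (sqrt C * ?x * ?y) * ?y) * ?x"
    unfolding curvature_numerator[OF X Y] abs_le_iff by linarith
  also have "\<dots> = 6 * (sqrt C * sqrt C) * (?x * ?x) * (?y * ?y)"
    by (simp add: field_simps)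
  finally show ?thesis using C_nonneg X Y by (simp add: gnorm_mult_self)
qed

theorem sectional_curvature_le:
  assumes X: "X \<in> V" and Y: "Y \<in> V"
    and indep: "\<forall>a b :: real. a *\<^sub>R X + b *\<^sub>R Y = 0 \<longrightarrow> a = 0 \<and> b = 0"
  shows "g (curvature X Y Y) X / (g X X * g Y Y - (g X Y)\<^sup>2) \<le> 6 * C"
proof -
  have "X \<noteq> 0" using indep[rule_format, of 1 0] by auto
  then have gX: "0 < g X X" using g_pos[OF X] by blast
  define t where "t = g X Y / g X X"
  define Y' where "Y' = Y - t *\<^sub>R X"
  have Y'V: "Y' \<in> V" using X Y by (simp add: Y'_def subspace_diff[OF subspace_V] subspace_scale[OF subspace_V])
  have "Y' \<noteq> 0" using indep[rule_format, of "- t" 1] by (auto simp: Y'_def)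
  then have gY': "0 < g Y' Y'" using g_pos[OF Y'V] by blast
  have num: "g (curvature X Y Y) X = g (curvature X Y' Y') X"
    using curvature_shear[OF X Y'V, of t] by (simp add: Y'_def)
  have den: "g X X * g Y Y - (g X Y)\<^sup>2 = g X X * g Y' Y'"
    using gX g_sym[OF X Y]
    by (simp add: Y'_def t_def g_diff_left g_diff_right g_scaleR_left g_scaleR_right
        field_simps power2_eq_square)
  show ?thesis
    unfolding num den using curvature_numerator_le[OF X Y'V] gX gY'
    by (simp add: pos_divide_le_eq mult_ac)
qed

end

end

section \<open>The Lie algebra \<open>su(n,1)\<close>\<close>

definition jsign :: "'n option \<Rightarrow> complex" where
  "jsign i = (if i = None then -1 else 1)"

lemma jsign_sq [simp]: "jsign i * jsign i = 1"
  by (simp add: jsign_def)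

lemma cnj_jsign [simp]: "cnj (jsign i) = jsign i"
  by (simp add: jsign_def)

lemma Jmat_nth: "Jmat $ i $ j = (if i = j then jsign i else 0)"
  by (simp add: Jmat_def jsign_def)

lemma Jmat_mult_nth: "(Jmat ** A) $ a $ b = jsign a * A $ a $ b"
proof -
  have "(Jmat ** A) $ a $ b = (\<Sum>k\<in>UNIV. (if a = k then jsign a else 0) * A $ k $ b)"
    by (simp add: matrix_matrix_mult_def Jmat_nth)
  also have "\<dots> = (\<Sum>k\<in>UNIV. if a = k then jsign a * A $ k $ b else 0)"
    by (rule sum.cong) auto
  finally show ?thesis by simp
qed

lemma mult_Jmat_nth: "(A ** Jmat) $ a $ b = A $ a $ b * jsign b"
proof -
  have "(A ** Jmat) $ a $ b = (\<Sum>k\<in>UNIV. A $ a $ k * (if k = b then jsign k else 0))"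
    by (simp add: matrix_matrix_mult_def Jmat_nth)
  also have "\<dots> = (\<Sum>k\<in>UNIV. if k = b then A $ a $ k * jsign b else 0)"
    by (rule sum.cong) auto
  finally show ?thesis by simp
qed

lemma cadj_nth [simp]: "cadj A $ i $ j = cnj (A $ j $ i)"
  by (simp add: cadj_def)

lemma cadj_cadj [simp]: "cadj (cadj A) = A"
  by (simp add: vec_eq_iff)

lemma linear_cadj: "linear (cadj :: 'n::finite cmat \<Rightarrow> 'n cmat)"
  by (rule linearI) (simp_all add: vec_eq_iff complex_cnj_scaleR)

lemma cadj_add: "cadj (A + B) = cadj A + cadj B"
  by (simp add: vec_eq_iff)

lemma cadj_diff: "cadj (A - B) = cadj A - cadj B"
  by (simp add: vec_eq_iff)

lemma cadj_uminus: "cadj (- A) = - cadj A"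
  by (simp add: vec_eq_iff)

lemma cadj_scaleR: "cadj (r *\<^sub>R A) = r *\<^sub>R cadj A"
  by (simp add: vec_eq_iff complex_cnj_scaleR)

lemma cadj_mult: "cadj (A ** B) = cadj B ** cadj A"
  by (simp add: vec_eq_iff matrix_matrix_mult_def cnj_sum mult.commute)

lemma bilinear_matrix_mult: "bilinear ((**) :: 'n::finite cmat \<Rightarrow> 'n cmat \<Rightarrow> 'n cmat)"
  unfolding bilinear_def
  by (auto intro!: linearI simp: vec_eq_iff matrix_matrix_mult_def sum.distrib
      distrib_left distrib_right scaleR_sum_right)

lemma bilinear_lie_br: "bilinear (lie_br :: 'n::finite cmat \<Rightarrow> 'n cmat \<Rightarrow> 'n cmat)"
  unfolding bilinear_def lie_br_def
  by (auto intro!: linearI simp: bilinear_ladd[OF bilinear_matrix_mult] bilinear_radd[OF bilinear_matrix_mult]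
      bilinear_lmul[OF bilinear_matrix_mult] bilinear_rmul[OF bilinear_matrix_mult] scaleR_diff_right)

lemmas lie_br_add_left = bilinear_ladd[OF bilinear_lie_br]
  and lie_br_diff_right = bilinear_rsub[OF bilinear_lie_br]
  and lie_br_scaleR_left = bilinear_lmul[OF bilinear_lie_br]
  and lie_br_scaleR_right = bilinear_rmul[OF bilinear_lie_br]
  and lie_br_uminus_left = bilinear_lneg[OF bilinear_lie_br]
  and lie_br_uminus_right = bilinear_rneg[OF bilinear_lie_br]

lemma linear_lie_br: "linear (lie_br A)"
  using bilinear_lie_br unfolding bilinear_def by blast

lemma lie_br_anticomm: "lie_br A B = - lie_br B A"
  by (simp add: lie_br_def)

lemma lie_br_jacobi: "lie_br (lie_br A B) C = lie_br A (lie_br B C) - lie_br B (lie_br A C)"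
  by (simp add: lie_br_def matrix_mul_assoc bilinear_lsub[OF bilinear_matrix_mult]
      bilinear_rsub[OF bilinear_matrix_mult])

lemma cadj_lie_br: "cadj (lie_br A B) = lie_br (cadj B) (cadj A)"
  by (simp add: lie_br_def cadj_diff cadj_mult)

lemma inner_matrix_nth: "(X::'n::finite cmat) \<bullet> Y = (\<Sum>i\<in>UNIV. \<Sum>j\<in>UNIV. Re (X$i$j * cnj (Y$i$j)))"
  by (simp add: inner_vec_def inner_complex_def)

lemma inner_matrix_mult_left:
  fixes A B C :: "'n::finite cmat"
  shows "(A ** B) \<bullet> C = B \<bullet> (cadj A ** C)"
proof -
  have "(A ** B) \<bullet> C = (\<Sum>i\<in>UNIV. \<Sum>j\<in>UNIV. \<Sum>k\<in>UNIV. Re (A$i$k * B$k$j * cnj (C$i$j)))"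
    unfolding inner_matrix_nth matrix_matrix_mult_def by (simp only: vec_lambda_beta sum_distrib_right Re_sum)
  also have "\<dots> = (\<Sum>i\<in>UNIV. \<Sum>k\<in>UNIV. \<Sum>j\<in>UNIV. Re (A$i$k * B$k$j * cnj (C$i$j)))"
    by (rule sum.cong[OF refl], rule sum.swap)
  also have "\<dots> = (\<Sum>k\<in>UNIV. \<Sum>i\<in>UNIV. \<Sum>j\<in>UNIV. Re (A$i$k * B$k$j * cnj (C$i$j)))"
    by (rule sum.swap)
  also have "\<dots> = (\<Sum>k\<in>UNIV. \<Sum>j\<in>UNIV. \<Sum>i\<in>UNIV. Re (A$i$k * B$k$j * cnj (C$i$j)))"
    by (rule sum.cong[OF refl], rule sum.swap)
  also have "\<dots> = B \<bullet> (cadj A ** C)"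
    by (simp add: inner_matrix_nth matrix_matrix_mult_def sum_distrib_left Re_sum cnj_sum mult_ac)
  finally show ?thesis .
qed

lemma inner_matrix_mult_right:
  fixes A B C :: "'n::finite cmat"
  shows "(B ** A) \<bullet> C = B \<bullet> (C ** cadj A)"
proof -
  have "(B ** A) \<bullet> C = (\<Sum>i\<in>UNIV. \<Sum>j\<in>UNIV. \<Sum>k\<in>UNIV. Re (B$i$k * A$k$j * cnj (C$i$j)))"
    unfolding inner_matrix_nth matrix_matrix_mult_def by (simp only: vec_lambda_beta sum_distrib_right Re_sum)
  also have "\<dots> = (\<Sum>i\<in>UNIV. \<Sum>k\<in>UNIV. \<Sum>j\<in>UNIV. Re (B$i$k * A$k$j * cnj (C$i$j)))"
    by (rule sum.cong[OF refl], rule sum.swap)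
  also have "\<dots> = B \<bullet> (C ** cadj A)"
    by (simp add: inner_matrix_nth matrix_matrix_mult_def sum_distrib_left Re_sum cnj_sum mult_ac)
  finally show ?thesis .
qed

lemma inner_lie_br_left: "lie_br A W \<bullet> Z = W \<bullet> lie_br (cadj A) Z"
  unfolding lie_br_def inner_diff_left inner_diff_right inner_matrix_mult_left[of A W Z]
    inner_matrix_mult_right[of W A Z]
  by simp

lemma inner_cadj: "cadj (A::'n::finite cmat) \<bullet> cadj B = A \<bullet> B"
proof -
  have "cadj A \<bullet> cadj B = (\<Sum>i\<in>UNIV. \<Sum>j\<in>UNIV. Re (A$j$i * cnj (B$j$i)))"
    by (simp add: inner_matrix_nth flip: complex_cnj_mult)
  also have "\<dots> = A \<bullet> B" unfolding inner_matrix_nth by (rule sum.swap)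
  finally show ?thesis .
qed

lemma su_alg_iff:
  "X \<in> su_alg \<longleftrightarrow> trace X = 0 \<and> (\<forall>a b. cnj (X$b$a) * jsign b + jsign a * X$a$b = 0)"
  by (simp add: su_alg_def vec_eq_iff Jmat_mult_nth mult_Jmat_nth)

lemma subspace_su_alg: "subspace (su_alg :: 'n::finite cmat set)"
  unfolding subspace_def
proof (intro conjI ballI allI)
  fix X Y :: "'n cmat"
  assume X: "X \<in> su_alg" and Y: "Y \<in> su_alg"
  have "cnj ((X + Y)$b$a) * jsign b + jsign a * (X + Y)$a$b
      = (cnj (X$b$a) * jsign b + jsign a * X$a$b) + (cnj (Y$b$a) * jsign b + jsign a * Y$a$b)" for a b
    by (simp add: algebra_simps)
  moreover have "trace (X + Y) = trace X + trace Y" by (simp add: trace_def sum.distrib)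
  ultimately show "X + Y \<in> su_alg" using X Y by (simp add: su_alg_iff)
next
  fix c :: real and X :: "'n cmat"
  assume X: "X \<in> su_alg"
  have "cnj ((c *\<^sub>R X)$b$a) * jsign b + jsign a * (c *\<^sub>R X)$a$b
      = of_real c * (cnj (X$b$a) * jsign b + jsign a * X$a$b)" for a b
    using scaleR_conv_of_real[of c "_ :: complex"] by (simp add: algebra_simps)
  moreover have "trace (c *\<^sub>R X) = c *\<^sub>R trace X" by (simp add: trace_def scaleR_sum_right)
  ultimately show "c *\<^sub>R X \<in> su_alg" using X by (simp add: su_alg_iff)
qed (simp add: su_alg_iff trace_def)

lemmas su_alg_add = subspace_add[OF subspace_su_alg]
  and su_alg_diff = subspace_diff[OF subspace_su_alg]
  and su_alg_scaleR = subspace_scale[OF subspace_su_alg]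
  and su_alg_uminus = subspace_neg[OF subspace_su_alg]

lemma cadj_in_su_alg: assumes "X \<in> su_alg" shows "cadj X \<in> su_alg"
proof -
  have tr: "trace (cadj X) = cnj (trace X)" by (simp add: trace_def cnj_sum)
  have "X$a$b * jsign b + jsign a * cnj (X$b$a) = 0" for a b
  proof -
    have "cnj (cnj (X$a$b) * jsign a + jsign b * X$b$a) = 0"
      using assms unfolding su_alg_iff by simp
    then have "X$a$b * jsign a + jsign b * cnj (X$b$a) = 0" by simp
    then show ?thesis by (auto simp: jsign_def split: if_splits)
  qed
  then show ?thesis using assms tr by (simp add: su_alg_iff)
qed

lemma lie_br_in_su_alg:
  fixes X Y :: "'n::finite cmat"
  assumes X: "X \<in> su_alg" and Y: "Y \<in> su_alg"
  shows "lie_br X Y \<in> su_alg"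
proof -
  have tr: "trace (lie_br X Y) = 0"
    by (simp add: lie_br_def trace_sub trace_mul_sym[of X Y])
  have hX: "cadj X ** Jmat = - (Jmat ** X)" and hY: "cadj Y ** Jmat = - (Jmat ** Y)"
    using X Y by (simp_all add: su_alg_def add_eq_0_iff)
  have neg: "A ** (- B) = - (A ** B)" "(- A) ** B = - (A ** B)" for A B :: "'n cmat"
    by (simp_all add: bilinear_lneg[OF bilinear_matrix_mult] bilinear_rneg[OF bilinear_matrix_mult])
  have YX: "(cadj Y ** cadj X) ** Jmat = Jmat ** (Y ** X)"
    by (simp add: matrix_mul_assoc[symmetric] hX neg) (simp add: matrix_mul_assoc hY neg)
  have XY: "(cadj X ** cadj Y) ** Jmat = Jmat ** (X ** Y)"
    by (simp add: matrix_mul_assoc[symmetric] hY neg) (simp add: matrix_mul_assoc hX neg)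
  have "cadj (lie_br X Y) ** Jmat + Jmat ** lie_br X Y = 0"
    unfolding cadj_lie_br by (simp add: lie_br_def bilinear_lsub[OF bilinear_matrix_mult]
        bilinear_rsub[OF bilinear_matrix_mult] YX XY)
  then show ?thesis using tr by (simp add: su_alg_def)
qed

lemma ppart_in_su_alg: "X \<in> su_alg \<Longrightarrow> ppart X \<in> su_alg"
  by (simp add: ppart_def su_alg_scaleR su_alg_add cadj_in_su_alg)

lemma kpart_in_su_alg: "X \<in> su_alg \<Longrightarrow> kpart X \<in> su_alg"
  by (simp add: kpart_def su_alg_scaleR su_alg_diff cadj_in_su_alg)

lemma ppart_add_kpart: "ppart X + kpart X = X"
proof -
  have "ppart X + kpart X = (1/2::real) *\<^sub>R ((X + cadj X) + (X - cadj X))"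
    unfolding ppart_def kpart_def by (rule scaleR_add_right[symmetric])
  also have "(X + cadj X) + (X - cadj X) = (2::real) *\<^sub>R X" by (simp add: scaleR_2)
  finally show ?thesis by simp
qed

lemma cadj_ppart: "cadj (ppart X) = ppart X"
  by (simp add: ppart_def cadj_scaleR cadj_add add.commute)

lemma cadj_kpart: "cadj (kpart X) = - kpart X"
  by (simp add: kpart_def cadj_scaleR cadj_diff scaleR_diff_right)

definition offdiag_pair :: "'n option \<Rightarrow> 'n option \<Rightarrow> complex \<Rightarrow> complex \<Rightarrow> 'n::finite cmat" where
  "offdiag_pair i j \<alpha> \<beta> = (\<chi> a b. if a = i \<and> b = j then \<alpha> else if a = j \<and> b = i then \<beta> else 0)"

lemma offdiag_pair_in_su_alg:
  assumes "i \<noteq> j" "cnj \<beta> * jsign j + jsign i * \<alpha> = 0"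
  shows "offdiag_pair i j \<alpha> \<beta> \<in> su_alg"
proof -
  have "offdiag_pair i j \<alpha> \<beta> $ k $ k = 0" for k
    using assms(1) by (auto simp: offdiag_pair_def)
  then have "trace (offdiag_pair i j \<alpha> \<beta>) = 0" by (simp add: trace_def)
  moreover have "cnj \<alpha> * jsign i + jsign j * \<beta> = 0"
    using arg_cong[OF assms(2), of cnj] by (simp add: algebra_simps)
  ultimately show ?thesis using assms unfolding su_alg_iff by (auto simp: offdiag_pair_def)
qed

lemma offdiag_pair_mult_nth:
  assumes ij: "i \<noteq> j"
  shows "(Z ** offdiag_pair i j \<alpha> \<beta>) $ a $ j = Z$a$i * \<alpha>"
    and "(offdiag_pair i j \<alpha> \<beta> ** Z) $ a $ j =
           (if a = i then \<alpha> * Z$j$j else if a = j then \<beta> * Z$i$j else 0)"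
proof -
  have "(Z ** offdiag_pair i j \<alpha> \<beta>) $ a $ j = (\<Sum>k\<in>UNIV. Z$a$k * offdiag_pair i j \<alpha> \<beta> $ k $ j)"
    by (simp add: matrix_matrix_mult_def)
  also have "\<dots> = (\<Sum>k\<in>UNIV. if k = i then Z$a$i * \<alpha> else 0)"
    by (rule sum.cong) (use ij in \<open>auto simp: offdiag_pair_def\<close>)
  finally show "(Z ** offdiag_pair i j \<alpha> \<beta>) $ a $ j = Z$a$i * \<alpha>" by simp
next
  have "(offdiag_pair i j \<alpha> \<beta> ** Z) $ a $ j = (\<Sum>k\<in>UNIV. offdiag_pair i j \<alpha> \<beta> $ a $ k * Z$k$j)"
    by (simp add: matrix_matrix_mult_def)
  also have "\<dots> = (\<Sum>k\<in>UNIV. (if k = j then (if a = i then \<alpha> * Z$j$j else 0) else 0)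
      + (if k = i then (if a = j then \<beta> * Z$i$j else 0) else 0))"
    by (rule sum.cong) (use ij in \<open>auto simp: offdiag_pair_def\<close>)
  finally show "(offdiag_pair i j \<alpha> \<beta> ** Z) $ a $ j =
      (if a = i then \<alpha> * Z$j$j else if a = j then \<beta> * Z$i$j else 0)"
    using ij by (simp add: sum.distrib)
qed

lemma commute_offdiag_pairs:
  assumes ij: "i \<noteq> j" and comm: "\<And>W. W \<in> su_alg \<Longrightarrow> lie_br Z W = 0"
  shows "Z$j$i = 0" "Z$i$i = Z$j$j"
proof -
  define s where "s = jsign i * jsign j"
  have s: "s \<noteq> 0" by (simp add: s_def jsign_def)
  have W1: "offdiag_pair i j 1 (- s) \<in> su_alg" and W2: "offdiag_pair i j \<i> (\<i> * s) \<in> su_alg"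
    using ij by (auto intro: offdiag_pair_in_su_alg simp: s_def algebra_simps)
  have e1: "(Z ** offdiag_pair i j 1 (- s)) $ a $ j = (offdiag_pair i j 1 (- s) ** Z) $ a $ j" for a
    using comm[OF W1] by (simp add: lie_br_def)
  have e2: "(Z ** offdiag_pair i j \<i> (\<i> * s)) $ a $ j = (offdiag_pair i j \<i> (\<i> * s) ** Z) $ a $ j" for a
    using comm[OF W2] by (simp add: lie_br_def)
  have "Z$j$i = - s * Z$i$j" "Z$j$i = s * Z$i$j"
    using e1[of j] e2[of j] ij by (simp_all add: offdiag_pair_mult_nth mult.commute)
  then show "Z$j$i = 0" using s by simp
  show "Z$i$i = Z$j$j" using e1[of i] by (simp add: offdiag_pair_mult_nth[OF ij])
qed

lemma su_alg_center_trivial: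
  fixes Z :: "'n::finite cmat"
  assumes Z: "Z \<in> su_alg" and comm: "\<And>W. W \<in> su_alg \<Longrightarrow> lie_br Z W = 0"
  shows "Z = 0"
proof -
  have diag: "Z$a$a = Z$None$None" for a
  proof (cases "a = None")
    case False
    then show ?thesis by (rule commute_offdiag_pairs(2)) (rule comm)
  qed simp
  have "trace Z = (\<Sum>i\<in>(UNIV :: 'n option set). Z$None$None)"
    unfolding trace_def by (rule sum.cong[OF refl]) (rule diag)
  then have "trace Z = of_nat CARD('n option) * Z$None$None" by simp
  moreover have "(of_nat CARD('n option) :: complex) \<noteq> 0"
    by (simp only: of_nat_eq_0_iff) simp
  ultimately have z: "Z$None$None = 0" using Z by (simp add: su_alg_def)
  then have "Z$a$b = 0" for a b
  proof (cases "a = b")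
    case False
    then have "b \<noteq> a" by simp
    then show ?thesis by (rule commute_offdiag_pairs(1)) (rule comm)
  qed (simp only: diag[of b] z)
  then show ?thesis by (simp add: vec_eq_iff)
qed

section \<open>The Killing form and the metric \<open>g\<^sub>~\<close>\<close>

lemma linear_lie_br_comp: "linear T \<Longrightarrow> linear (\<lambda>U. lie_br A (T U))"
  using linear_compose[OF _ linear_lie_br] by (simp add: o_def)

lemma killing_sym:
  assumes "X \<in> su_alg" "Y \<in> su_alg"
  shows "killing X Y = killing Y X"
  unfolding killing_def using assms
  by (intro trace_on_commute[OF subspace_su_alg linear_lie_br _ linear_lie_br])
    (simp_all add: lie_br_in_su_alg)

lemma killing_uminus_left:
  assumes "X \<in> su_alg" "Y \<in> su_alg"
  shows "killing (- X) Y = - killing X Y"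
  using trace_on_scaleR[OF subspace_su_alg linear_lie_br_comp[OF linear_lie_br], of X Y "-1"] assms
  by (simp add: killing_def lie_br_uminus_left lie_br_in_su_alg)

lemma killing_invariant:
  fixes Z X W :: "'n::finite cmat"
  assumes Z: "Z \<in> su_alg" and X: "X \<in> su_alg" and W: "W \<in> su_alg"
  shows "killing (lie_br Z X) W = - killing X (lie_br Z W)"
proof -
  let ?tr = "trace_on (su_alg :: 'n cmat set)"
  have lin: "linear (\<lambda>U. lie_br A (lie_br B (lie_br C U)))" for A B C :: "'n cmat"
    by (intro linear_lie_br_comp linear_lie_br)
  have cl: "lie_br A (lie_br B (lie_br C U)) \<in> su_alg"
    if "A \<in> su_alg" "B \<in> su_alg" "C \<in> su_alg" "U \<in> su_alg" for A B C U :: "'n cmat"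
    using that by (simp add: lie_br_in_su_alg)
  have "killing (lie_br Z X) W
      = ?tr (\<lambda>U. lie_br Z (lie_br X (lie_br W U))) - ?tr (\<lambda>U. lie_br X (lie_br Z (lie_br W U)))"
    unfolding killing_def lie_br_jacobi using Z X W
    by (intro trace_on_diff[OF subspace_su_alg lin _ lin]) (simp_all add: cl)
  moreover have "killing X (lie_br Z W)
      = ?tr (\<lambda>U. lie_br X (lie_br Z (lie_br W U))) - ?tr (\<lambda>U. lie_br X (lie_br W (lie_br Z U)))"
    unfolding killing_def lie_br_jacobi lie_br_diff_right using Z X W
    by (intro trace_on_diff[OF subspace_su_alg lin _ lin]) (simp_all add: cl)
  moreover have "?tr (\<lambda>U. lie_br Z (lie_br X (lie_br W U))) = ?tr (\<lambda>U. lie_br X (lie_br W (lie_br Z U)))"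
    using Z X W
    by (intro trace_on_commute[OF subspace_su_alg linear_lie_br _ linear_lie_br_comp[OF linear_lie_br]])
      (simp_all add: lie_br_in_su_alg)
  ultimately show ?thesis by simp
qed

text \<open>The Cartan involution \<open>X \<mapsto> -X\<^sup>*\<close> is an automorphism, hence preserves the Killing form.\<close>
lemma killing_cadj:
  assumes X: "X \<in> su_alg" and Y: "Y \<in> su_alg"
  shows "killing (cadj X) (cadj Y) = killing X Y"
proof -
  have conj: "lie_br (cadj X) (lie_br (cadj Y) U) = cadj (lie_br X (lie_br Y (cadj U)))" for U
  proof -
    have "cadj (lie_br X (lie_br Y (cadj U))) = lie_br (lie_br U (cadj Y)) (cadj X)"
      by (simp add: cadj_lie_br)
    also have "\<dots> = - lie_br (cadj X) (- lie_br (cadj Y) U)"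
      by (metis lie_br_anticomm)
    finally show ?thesis by (simp add: lie_br_uminus_right)
  qed
  show ?thesis
    unfolding killing_def conj using X Y
    by (intro trace_on_conj_isometric_involution[OF subspace_su_alg linear_cadj _ _ _
          linear_lie_br_comp[OF linear_lie_br]])
      (simp_all add: cadj_in_su_alg inner_cadj lie_br_in_su_alg)
qed

lemma killing_hermitian_skew:
  assumes "A \<in> su_alg" "B \<in> su_alg" "cadj A = - A" "cadj B = B"
  shows "killing A B = 0"
  using killing_cadj[of A B] killing_uminus_left[of A B] assms by simp

definition frob_frame :: "'n::finite cmat set" where
  "frob_frame = (SOME F. orthonormal_frame (\<bullet>) su_alg F)"

lemma orthonormal_frame_frob_frame: "orthonormal_frame (\<bullet>) su_alg frob_frame"
  unfolding frob_frame_def using orthonormal_frame_exists[OF subspace_su_alg] by (metis someI)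

text \<open>An extension of \<open>g\<^sub>~\<close> to all matrices, bilinear and visibly positive: on \<open>su(n,1)\<close>
  it is \<open>B(X\<^sup>*, Y) / (n+1)\<close>, here written as a sum of squares over a Frobenius-orthonormal basis.\<close>
definition tilde_metric :: "'n::finite cmat \<Rightarrow> 'n cmat \<Rightarrow> real" where
  "tilde_metric X Y = (\<Sum>e\<in>frob_frame. lie_br X e \<bullet> lie_br Y e) / (real CARD('n) + 1)"

lemma killing_cadj_left:
  fixes X Y :: "'n::finite cmat"
  assumes "X \<in> su_alg" "Y \<in> su_alg"
  shows "killing (cadj X) Y = (real CARD('n) + 1) * tilde_metric X Y"
proof -
  have "killing (cadj X) Y = (\<Sum>e\<in>frob_frame. lie_br (cadj X) (lie_br Y e) \<bullet> e)"
    unfolding killing_def using assms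
    by (intro trace_on_orthonormal_frame[OF subspace_su_alg bilinear_inner orthonormal_frame_frob_frame
          linear_lie_br_comp[OF linear_lie_br]]) (simp add: lie_br_in_su_alg cadj_in_su_alg)
  also have "\<dots> = (\<Sum>e\<in>frob_frame. lie_br X e \<bullet> lie_br Y e)"
    by (simp add: inner_lie_br_left inner_commute)
  finally show ?thesis by (simp add: tilde_metric_def)
qed

lemma bilinear_tilde_metric: "bilinear tilde_metric"
  unfolding bilinear_def tilde_metric_def
  by (auto intro!: linearI simp: lie_br_add_left lie_br_scaleR_left inner_add_left inner_add_right
      sum.distrib sum_distrib_left add_divide_distrib)

lemma tilde_metric_sym: "tilde_metric X Y = tilde_metric Y X"
  by (simp add: tilde_metric_def inner_commute)

lemma tilde_metric_pos:
  fixes X :: "'n::finite cmat"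
  assumes X: "X \<in> su_alg" and nz: "X \<noteq> 0"
  shows "0 < tilde_metric X X"
proof (rule ccontr)
  have fin: "finite (frob_frame :: 'n cmat set)"
    using orthonormal_frame_frob_frame unfolding orthonormal_frame_def by blast
  assume "\<not> 0 < tilde_metric X X"
  moreover have "0 \<le> (\<Sum>e\<in>frob_frame. lie_br X e \<bullet> lie_br X e)"
    by (simp add: sum_nonneg)
  ultimately have "(\<Sum>e\<in>frob_frame. lie_br X e \<bullet> lie_br X e) = 0"
    by (auto simp: tilde_metric_def zero_less_divide_iff add_pos_nonneg)
  then have ad0: "lie_br X e = 0" if "e \<in> frob_frame" for e
    using sum_nonneg_eq_0_iff[OF fin, of "\<lambda>e. lie_br X e \<bullet> lie_br X e"] that by simp
  have "lie_br X W = 0" if "W \<in> su_alg" for W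
  proof -
    have "lie_br X W = lie_br X (\<Sum>e\<in>frob_frame. (W \<bullet> e) *\<^sub>R e)"
      using orthonormal_frame_expansion[OF bilinear_inner orthonormal_frame_frob_frame that] by simp
    also have "\<dots> = 0"
      by (simp add: linear_sum[OF linear_lie_br] linear_scale[OF linear_lie_br] ad0)
    finally show ?thesis .
  qed
  then show False using su_alg_center_trivial[OF X] nz by blast
qed

lemma inner_product_on_tilde_metric: "inner_product_on tilde_metric su_alg"
  by (simp add: inner_product_on_def bilinear_tilde_metric tilde_metric_sym tilde_metric_pos)

lemma gtil_eq_tilde_metric:
  fixes X Y :: "'n::finite cmat"
  assumes X: "X \<in> su_alg" and Y: "Y \<in> su_alg"
  shows "gtil X Y = tilde_metric X Y"
proof -
  let ?N = "real CARD('n) + 1"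
  let ?p = "ppart X" and ?k = "kpart X" and ?p' = "ppart Y" and ?k' = "kpart Y"
  have su: "?p \<in> su_alg" "?k \<in> su_alg" "?p' \<in> su_alg" "?k' \<in> su_alg" "- ?k \<in> su_alg"
    using X Y by (simp_all add: ppart_in_su_alg kpart_in_su_alg su_alg_uminus)
  have pp: "killing ?p ?p' = ?N * tilde_metric ?p ?p'"
    using killing_cadj_left[of ?p ?p'] su by (simp add: cadj_ppart)
  have kk: "killing ?k ?k' = - (?N * tilde_metric ?k ?k')"
    using killing_cadj_left[of ?k ?k'] killing_uminus_left[of ?k ?k'] su by (simp add: cadj_kpart)
  have pk: "tilde_metric ?p ?k' = 0"
    using killing_cadj_left[of ?p ?k'] killing_sym[of ?p ?k'] su
      killing_hermitian_skew[of ?k' ?p] by (simp add: cadj_ppart cadj_kpart)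
  have kp: "tilde_metric ?k ?p' = 0"
    using killing_cadj_left[of ?k ?p'] su killing_hermitian_skew[of "- ?k" ?p']
    by (simp add: cadj_uminus cadj_kpart cadj_ppart)
  have "tilde_metric X Y = tilde_metric (?p + ?k) (?p' + ?k')" by (simp add: ppart_add_kpart)
  also have "\<dots> = tilde_metric ?p ?p' + tilde_metric ?k ?k'"
    by (simp add: bilinear_ladd[OF bilinear_tilde_metric] bilinear_radd[OF bilinear_tilde_metric] pk kp)
  finally show ?thesis by (simp add: gtil_def gcan_def pp kk field_simps)
qed

lemma tilde_metric_ad_adjoint:
  fixes A U W :: "'n::finite cmat"
  assumes A: "A \<in> su_alg" and U: "U \<in> su_alg" and W: "W \<in> su_alg"
  shows "tilde_metric (lie_br A U) W = tilde_metric U (lie_br (cadj A) W)"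
proof -
  let ?N = "real CARD('n) + 1"
  have su: "cadj A \<in> su_alg" "cadj U \<in> su_alg" using A U by (simp_all add: cadj_in_su_alg)
  have "?N * tilde_metric (lie_br A U) W = killing (lie_br (cadj U) (cadj A)) W"
    using killing_cadj_left[of "lie_br A U" W] A U W by (simp add: lie_br_in_su_alg cadj_lie_br)
  also have "\<dots> = - killing (lie_br (cadj A) (cadj U)) W"
    using killing_uminus_left[of "lie_br (cadj A) (cadj U)" W] su W
    by (simp add: lie_br_anticomm[of "cadj U"] lie_br_in_su_alg)
  also have "\<dots> = killing (cadj U) (lie_br (cadj A) W)"
    using killing_invariant[OF su(1,2) W] by simp
  also have "\<dots> = ?N * tilde_metric U (lie_br (cadj A) W)"
    using killing_cadj_left[of U "lie_br (cadj A) W"] U W su by (simp add: lie_br_in_su_alg)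
  finally show ?thesis by simp
qed

lemma tilde_metric_lie_br_le:
  fixes Z Y :: "'n::finite cmat"
  assumes Z: "Z \<in> su_alg" and Y: "Y \<in> su_alg"
  shows "tilde_metric (lie_br Z Y) (lie_br Z Y)
           \<le> (real CARD('n) + 1) * tilde_metric Z Z * tilde_metric Y Y"
proof (cases "Y = 0")
  case True
  then show ?thesis
    by (simp add: bilinear_rzero[OF bilinear_lie_br] bilinear_lzero[OF bilinear_tilde_metric])
next
  case False
  let ?N = "real CARD('n) + 1" and ?m = "tilde_metric"
  note bil = bilinear_tilde_metric
  have pos: "0 < ?m Y Y" using tilde_metric_pos[OF Y False] .
  define y where "y = (1 / sqrt (?m Y Y)) *\<^sub>R Y"
  have y: "y \<in> su_alg" "?m y y = 1"
    using Y pos by (simp_all add: y_def su_alg_scaleR bilinear_lmul[OF bil] bilinear_rmul[OF bil])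
  then obtain F where "{y} \<subseteq> F" and F: "orthonormal_frame ?m su_alg F"
    using orthonormal_frame_extend[OF inner_product_on_tilde_metric subspace_su_alg, of "{y}"]
    by (auto simp: orthonormal_wrt_def)
  then have yF: "y \<in> F" and fin: "finite F" and FV: "F \<subseteq> su_alg"
    by (auto simp: orthonormal_frame_def)
  have Zs: "cadj Z \<in> su_alg" using Z by (rule cadj_in_su_alg)
  have "?N * ?m Z Z = killing (cadj Z) Z" using killing_cadj_left[OF Z Z] by simp
  also have "\<dots> = (\<Sum>f\<in>F. ?m (lie_br (cadj Z) (lie_br Z f)) f)"
    unfolding killing_def using Z Zs
    by (intro trace_on_orthonormal_frame[OF subspace_su_alg bil F linear_lie_br_comp[OF linear_lie_br]])
      (simp add: lie_br_in_su_alg)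
  also have "\<dots> = (\<Sum>f\<in>F. ?m (lie_br Z f) (lie_br Z f))"
    using tilde_metric_ad_adjoint[OF Zs] Z FV by (intro sum.cong) (auto simp: lie_br_in_su_alg)
  finally have "?m (lie_br Z y) (lie_br Z y) \<le> ?N * ?m Z Z"
    using member_le_sum[OF yF _ fin, of "\<lambda>f. ?m (lie_br Z f) (lie_br Z f)"]
    by (simp add: tilde_metric_def sum_nonneg)
  moreover have "?m (lie_br Z y) (lie_br Z y) = ?m (lie_br Z Y) (lie_br Z Y) / ?m Y Y"
    using pos by (simp add: y_def lie_br_scaleR_right bilinear_lmul[OF bil] bilinear_rmul[OF bil])
  ultimately show ?thesis using pos by (simp add: divide_le_eq mult_ac)
qed

section \<open>Sectional curvature of \<open>SU(n,1)\<close>\<close>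

interpretation su: metric_lie_algebra "su_alg :: 'n::finite cmat set" lie_br tilde_metric
  by unfold_locales
    (assumption | rule subspace_su_alg bilinear_lie_br lie_br_anticomm lie_br_in_su_alg
      inner_product_on_tilde_metric)+

lemma nabla_eq_nab:
  assumes "X \<in> su_alg" "Y \<in> su_alg"
  shows "nabla X Y = su.nab X Y"
  unfolding nabla_def su.nab_def su.koszul_def using assms
  by (intro arg_cong[of _ _ The] ext) (auto simp: gtil_eq_tilde_metric lie_br_in_su_alg)

lemma sec_curv_eq_tilde_metric:
  assumes X: "X \<in> su_alg" and Y: "Y \<in> su_alg"
  shows "sec_curv X Y = tilde_metric (su.curvature X Y Y) X
           / (tilde_metric X X * tilde_metric Y Y - (tilde_metric X Y)\<^sup>2)"
proof -
  have "curv X Y Y = su.curvature X Y Y"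
    using X Y by (simp add: curv_def su.curvature_def nabla_eq_nab su.nab_in lie_br_in_su_alg)
  then show ?thesis
    using X Y su.curvature_in[of X Y Y] by (simp add: sec_curv_def gtil_eq_tilde_metric)
qed

theorem proposition3p9:
  fixes X Y :: "'n::finite cmat"
  assumes "X \<in> su_alg" and "Y \<in> su_alg"
    and "\<forall>a b :: real. a *\<^sub>R X + b *\<^sub>R Y = 0 \<longrightarrow> a = 0 \<and> b = 0"
  shows "sec_curv X Y \<le> (36 * real CARD('n) + 21) / 4"
proof -
  have n: "1 \<le> real CARD('n)" by simp
  have "sec_curv X Y \<le> 6 * (real CARD('n) + 1)"
    unfolding sec_curv_eq_tilde_metric[OF assms(1,2)]
    using su.sectional_curvature_le[OF _ tilde_metric_lie_br_le assms] by simp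
  then show ?thesis by (simp add: field_simps) (use n in linarith)
qed

end
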